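(* Let $M$ be a compact finite dimensional boundaryless manifold with normalized Riemannian volume $m$, $f:M\to M$ a diffeomorphism, $F$ a physical random perturbation of $f$, and $\{\Lambda_i\}_{i=1}^N$, $N\in\mathbb{N}\cup\{\infty\}$, pairwise disjoint compact sets such that (A) each $\Lambda_i$ is an attractor and $\bigcup_i W^s(\Lambda_i)=M$ up to an $m$-null set, and (B) each $\Lambda_i$ supports an $f$-invariant probability $\mu_i$ which is stochastically stable with respect to $F$. Fix $i\in\{1,\dots,N\}$ and for all small $\epsilon>0$ let $\mu_i^\epsilon$ be the unique probability measure associated to $\Lambda_i$ at noise level $\epsilon$ (see context). Then $m\big(W^s(\Lambda_i)\setminus B(\mu_i^\epsilon)\big)\to0$ as $\epsilon\to0^+$.
   Context: $M$ carries a fixed smooth Riemannian metric with distance $\mathrm{dist}$ and normalized volume $m$. For $r>0$, $B_r=\{x\in\mathbb{R}^n:\|x\|_2<r\}$. Physical random perturbation: a $C^1$ map $F:M\times B_1\to M$, $(x,t)\mapsto f_t(x)$, each $f_t$ a diffeomorphism, such that for some $\epsilon_0\in(0,1)$ and all $\epsilon\in(0,\epsilon_0)$: (I) $f_0=f$; (II) with $\Delta_\epsilon=\{\underline t=(t_j)_{j\ge1}: t_j\in\mathbb{R}^n,\ \|t_j\|_2\le\epsilon\}$ and $f^j(x,\underline t)=f_{t_j}\circ\cdots\circ f_{t_1}(x)$, there are $K\in\mathbb{N}$, $\xi>0$ with $\{f^j(x,\underline t):\underline t\in\Delta_\epsilon\}\supset B(f^j(x),\xi)$ for all $x$ and $j\ge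 K$; (III) with $\nu_\epsilon$ normalized Lebesgue measure on $\overline{B_\epsilon}$ and $\nu_\epsilon^\infty$ the product measure on $\Delta_\epsilon$, for all $x$ and $k\ge K$ the push-forward of $\nu_\epsilon^\infty$ by $\underline t\mapsto f^k(x,\underline t)$ is absolutely continuous w.r.t. $m$. Attractor: a compact $\Lambda$ with $f(\Lambda)=\Lambda$, having an open neighborhood $U$ with $f(\overline U)\subset U$ and $\Lambda=\bigcap_{k\ge1}f^k(\overline U)$, and containing a point with dense forward orbit in $\Lambda$; $W^s(\Lambda)=\{x:\mathrm{dist}(f^k(x),\Lambda)\to0\}$. For an attractor $\Lambda$ there are an open $U\supset\Lambda$ and $\epsilon_0>0$ such that for $\epsilon\in(0,\epsilon_0)$ there is exactly one probability $\mu^\epsilon$ with $\Lambda\subset\operatorname{supp}\mu^\epsilon\subset U$ such that for all $x\in U$, $\nu_\epsilon^\infty$-a.e. $\underline t$ and all continuous $\varphi$, $\frac1n\sum_{j<n}\varphi(f^j(x,\underline t))\to\int\varphi\,d\mu^\epsilon$; for $\Lambda=\Lambda_i$ this is $\mu_i^\epsilon$. $(\Lambda,\mu)$ is stochastically stable if $\mu^\epsilon\to\mu$ weak$^*$ as $\epsilon\to0^+$. Basin of a probability $\mu$: $B(\mu)=\{x\in M: \frac1k\sum_{j=0}^{k-1}\delta_{f^j(x,\underline t)}\to\mu \text{ weak}^* \text{ for } \nu_\epsilon^\infty\text{-a.e. } \underline t\in\Delta_\epsilon\}$. *)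

theory Defs
  imports "HOL-Probability.Probability"
begin

fun dd :: "('a::real_normed_vector \<Rightarrow> 'b::real_normed_vector) \<Rightarrow> 'a list \<Rightarrow> 'a \<Rightarrow> 'b" where
  "dd g [] = g"
| "dd g (v # vs) = (\<lambda>x. vector_derivative (\<lambda>s. dd g vs (x + s *\<^sub>R v)) (at 0))"

definition smooth_on :: "'a::real_normed_vector set \<Rightarrow> ('a \<Rightarrow> 'b::real_normed_vector) \<Rightarrow> bool" where
  "smooth_on U g \<longleftrightarrow> open U \<and>
     (\<forall>vs. continuous_on U (dd g vs) \<and>
        (\<forall>v. \<forall>x\<in>U. ((\<lambda>s. dd g vs (x + s *\<^sub>R v)) has_vector_derivative dd g (v # vs) x) (at 0)))"

definition C1_on :: "'a::real_normed_vector set \<Rightarrow> ('a \<Rightarrow> 'b::real_normed_vector) \<Rightarrow> bool" where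
  "C1_on U h \<longleftrightarrow> (\<exists>h'. (\<forall>x\<in>U. (h has_derivative blinfun_apply (h' x)) (at x)) \<and> continuous_on U h')"

text \<open>A local parametrisation (inverse chart) of M, with parameter domain an open subset of R^d,
  d = CARD('d): a smooth immersion that is a homeomorphism onto an open subset of M.\<close>
definition chart :: "'k::euclidean_space set \<Rightarrow> (real^'d) set \<Rightarrow> (real^'d \<Rightarrow> 'k) \<Rightarrow> bool" where
  "chart M U \<phi> \<longleftrightarrow> open U \<and> smooth_on U \<phi> \<and>
     (\<forall>u\<in>U. \<exists>D. (\<phi> has_derivative D) (at u) \<and> inj D) \<and>
     inj_on \<phi> U \<and> \<phi> ` U \<subseteq> M \<and> openin (top_of_set M) (\<phi> ` U) \<and>
     continuous_on (\<phi> ` U) (inv_into U \<phi>)"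

definition compact_smooth_submanifold :: "'k::euclidean_space set \<Rightarrow> 'd::finite itself \<Rightarrow> bool" where
  "compact_smooth_submanifold M (d::'d itself) \<longleftrightarrow> compact M \<and>
     (\<forall>p\<in>M. \<exists>U (\<phi>::real^'d \<Rightarrow> 'k). chart M U \<phi> \<and> p \<in> \<phi> ` U)"

text \<open>Gram determinant of the derivative of a parametrisation (square of the Riemannian volume density
  of the induced metric).\<close>
definition gram :: "(real^'d \<Rightarrow> 'k::euclidean_space) \<Rightarrow> real^'d \<Rightarrow> real" where
  "gram \<phi> u = det (\<chi> i j. frechet_derivative \<phi> (at u) (axis i 1) \<bullet> frechet_derivative \<phi> (at u) (axis j 1))"

abbreviation Mborel :: "'k::topological_space set \<Rightarrow> 'k measure" where
  "Mborel M \<equiv> restrict_space borel M"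

text \<open>m is the normalized Riemannian volume of M (for the metric induced from the ambient space).\<close>
definition normalized_volume :: "'k::euclidean_space set \<Rightarrow> 'd::finite itself \<Rightarrow> 'k measure \<Rightarrow> bool" where
  "normalized_volume M (d::'d itself) m \<longleftrightarrow> prob_space m \<and> sets m = sets (Mborel M) \<and>
     (\<exists>c>0. \<forall>U (\<phi>::real^'d \<Rightarrow> 'k). chart M U \<phi> \<longrightarrow>
        (\<forall>A\<in>sets borel. A \<subseteq> \<phi> ` U \<longrightarrow>
           emeasure m A = ennreal c * (\<integral>\<^sup>+ u. indicator (U \<inter> \<phi> -` A) u * ennreal (sqrt (gram \<phi> u)) \<partial>lborel)))"

definition C1_map :: "'k::euclidean_space set \<Rightarrow> 'd::finite itself \<Rightarrow> ('k \<Rightarrow> 'k) \<Rightarrow> bool" where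
  "C1_map M (d::'d itself) g \<longleftrightarrow> (\<forall>U (\<phi>::real^'d \<Rightarrow> 'k). chart M U \<phi> \<longrightarrow> C1_on U (g \<circ> \<phi>))"

definition diffeo :: "'k::euclidean_space set \<Rightarrow> 'd::finite itself \<Rightarrow> ('k \<Rightarrow> 'k) \<Rightarrow> bool" where
  "diffeo M d g \<longleftrightarrow> bij_betw g M M \<and> C1_map M d g \<and> C1_map M d (inv_into M g)"

text \<open>f^j(x, t) = f_{t_j} o ... o f_{t_1} (x); the noise sequence is indexed from 0, so that
  step number j+1 uses t j.\<close>
fun itF :: "('k \<Rightarrow> 'n \<Rightarrow> 'k) \<Rightarrow> nat \<Rightarrow> 'k \<Rightarrow> (nat \<Rightarrow> 'n) \<Rightarrow> 'k" where
  "itF F 0 x t = x"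
| "itF F (Suc j) x t = F (itF F j x t) (t j)"

definition nu :: "real \<Rightarrow> 'n::euclidean_space measure" where
  "nu \<epsilon> = restrict_space (uniform_measure lborel (cball 0 \<epsilon>)) (cball 0 \<epsilon>)"

definition noise :: "real \<Rightarrow> (nat \<Rightarrow> 'n::euclidean_space) measure" where
  "noise \<epsilon> = PiM UNIV (\<lambda>_. nu \<epsilon>)"

definition phys_perturbation ::
  "'k::euclidean_space set \<Rightarrow> 'd::finite itself \<Rightarrow> 'k measure \<Rightarrow> ('k \<Rightarrow> 'k) \<Rightarrow> ('k \<Rightarrow> 'n::euclidean_space \<Rightarrow> 'k) \<Rightarrow> bool" where
  "phys_perturbation M (d::'d itself) m f F \<longleftrightarrow>
     (\<forall>x\<in>M. \<forall>t\<in>ball 0 1. F x t \<in> M) \<and>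
     (\<forall>U (\<phi>::real^'d \<Rightarrow> 'k). chart M U \<phi> \<longrightarrow> C1_on (U \<times> ball 0 1) (\<lambda>(u, t). F (\<phi> u) t)) \<and>
     (\<forall>t\<in>ball 0 1. diffeo M d (\<lambda>x. F x t)) \<and>
     (\<exists>\<epsilon>0. 0 < \<epsilon>0 \<and> \<epsilon>0 < 1 \<and>
        (\<forall>x\<in>M. F x 0 = f x) \<and>
        (\<forall>\<epsilon>. 0 < \<epsilon> \<and> \<epsilon> < \<epsilon>0 \<longrightarrow>
           (\<exists>K::nat. \<exists>\<xi>>0.
              (\<forall>x\<in>M. \<forall>j\<ge>K. ball ((f ^^ j) x) \<xi> \<inter> M \<subseteq> {itF F j x t | t. \<forall>l. norm (t l) \<le> \<epsilon>}) \<and>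
              (\<forall>x\<in>M. \<forall>k\<ge>K. absolutely_continuous m (distr (noise \<epsilon>) (Mborel M) (\<lambda>t. itF F k x t))))))"

definition attractor :: "'k::euclidean_space set \<Rightarrow> ('k \<Rightarrow> 'k) \<Rightarrow> 'k set \<Rightarrow> bool" where
  "attractor M f \<Lambda> \<longleftrightarrow> compact \<Lambda> \<and> \<Lambda> \<subseteq> M \<and> f ` \<Lambda> = \<Lambda> \<and>
     (\<exists>U. openin (top_of_set M) U \<and> \<Lambda> \<subseteq> U \<and> f ` closure U \<subseteq> U \<and>
          \<Lambda> = (\<Inter>k\<in>{1..}. (f ^^ k) ` closure U)) \<and>
     (\<exists>x\<in>\<Lambda>. \<Lambda> \<subseteq> closure (range (\<lambda>k. (f ^^ k) x)))"

definition Ws :: "'k::euclidean_space set \<Rightarrow> ('k \<Rightarrow> 'k) \<Rightarrow> 'k set \<Rightarrow> 'k set" where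
  "Ws M f \<Lambda> = {x\<in>M. (\<lambda>k. infdist ((f ^^ k) x) \<Lambda>) \<longlonglongrightarrow> 0}"

definition msupp :: "'k::euclidean_space set \<Rightarrow> 'k measure \<Rightarrow> 'k set" where
  "msupp M \<mu> = {x\<in>M. \<forall>e>0. emeasure \<mu> (ball x e \<inter> M) > 0}"

definition emp_conv :: "'k::euclidean_space set \<Rightarrow> ('k \<Rightarrow> 'n \<Rightarrow> 'k) \<Rightarrow> 'k \<Rightarrow> (nat \<Rightarrow> 'n) \<Rightarrow> 'k measure \<Rightarrow> bool" where
  "emp_conv M F x t \<mu> \<longleftrightarrow> (\<forall>\<phi>::'k \<Rightarrow> real. continuous_on M \<phi> \<longrightarrow>
      (\<lambda>k. (\<Sum>j<k. \<phi> (itF F j x t)) / real k) \<longlonglongrightarrow> (\<integral>y. \<phi> y \<partial>\<mu>))"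

definition basin :: "'k::euclidean_space set \<Rightarrow> ('k \<Rightarrow> 'n::euclidean_space \<Rightarrow> 'k) \<Rightarrow> real \<Rightarrow> 'k measure \<Rightarrow> 'k set" where
  "basin M F \<epsilon> \<mu> = {x\<in>M. AE t in noise \<epsilon>. emp_conv M F x t \<mu>}"

text \<open>mu is the (unique) stationary measure of the attractor Lambda at noise level eps,
  relative to the open neighbourhood U of Lambda.\<close>
definition stat_meas :: "'k::euclidean_space set \<Rightarrow> ('k \<Rightarrow> 'n::euclidean_space \<Rightarrow> 'k) \<Rightarrow> real \<Rightarrow> 'k set \<Rightarrow> 'k set \<Rightarrow> 'k measure \<Rightarrow> bool" where
  "stat_meas M F \<epsilon> \<Lambda> U \<mu> \<longleftrightarrow> prob_space \<mu> \<and> sets \<mu> = sets (Mborel M) \<and>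
     \<Lambda> \<subseteq> msupp M \<mu> \<and> msupp M \<mu> \<subseteq> U \<and>
     (\<forall>x\<in>U. AE t in noise \<epsilon>. emp_conv M F x t \<mu>)"

definition weak_conv_at_right0 :: "'k::euclidean_space set \<Rightarrow> (real \<Rightarrow> 'k measure) \<Rightarrow> 'k measure \<Rightarrow> bool" where
  "weak_conv_at_right0 M \<mu>e \<mu> \<longleftrightarrow> (\<forall>\<phi>::'k \<Rightarrow> real. continuous_on M \<phi> \<longrightarrow>
      ((\<lambda>\<epsilon>. \<integral>y. \<phi> y \<partial>\<mu>e \<epsilon>) \<longlongrightarrow> (\<integral>y. \<phi> y \<partial>\<mu>)) (at_right 0))"

end

theory Submission
  imports Defs
begin

text \<open>
  A point x of the stable set of \<Lambda> has an iterate f^k(x) close to \<Lambda>. By continuity of F on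
  the compact M, for noise of small enough size every random orbit of x stays close to the
  deterministic one up to time k, so all random orbits of x enter the neighbourhood U of \<Lambda> on
  which the stationary measure governs the empirical measures; the Markov property of the
  i.i.d. noise then puts x into the basin. The points for which noise size 1/(n+1) suffices form
  an increasing sequence of measurable sets G n exhausting the stable set, and for small noise
  the stable set minus the basin lies in the stable set minus G n, so its measure tends to 0.

  Measurability of basins is the technical point: convergence of empirical measures is
  quantified over all continuous test functions, and we reduce it to the countably many
  polynomials with rational coefficients.
\<close>

section \<open>Uniform approximation by rational polynomials\<close>

text \<open>Polynomials with rational coefficients, as a datatype so that they are countable; Coord n is
  the n-th coordinate with respect to an enumeration of the basis.\<close>

datatype rat_poly = Const rat | Coord nat | Add rat_poly rat_poly | Mult rat_poly rat_poly

instance rat_poly :: countable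
  by countable_datatype

fun rat_poly_eval :: "rat_poly \<Rightarrow> 'a::euclidean_space \<Rightarrow> real" where
  "rat_poly_eval (Const q) x = of_rat q"
| "rat_poly_eval (Coord n) x = x \<bullet> from_nat_into Basis n"
| "rat_poly_eval (Add p q) x = rat_poly_eval p x + rat_poly_eval q x"
| "rat_poly_eval (Mult p q) x = rat_poly_eval p x * rat_poly_eval q x"

lemma continuous_on_rat_poly_eval: "continuous_on S (rat_poly_eval p)"
  by (induction p) (auto intro!: continuous_intros)

lemma borel_measurable_rat_poly_eval [measurable]: "rat_poly_eval p \<in> borel_measurable borel"
  by (intro borel_measurable_continuous_onI continuous_on_rat_poly_eval)

lemma rat_poly_dense:
  fixes g :: "'a::euclidean_space \<Rightarrow> real"
  assumes S: "compact S" and g: "continuous_on S g" and e: "e > 0"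
  obtains p where "\<And>x. x \<in> S \<Longrightarrow> \<bar>g x - rat_poly_eval p x\<bar> < e"
proof -
  txt \<open>The uniform closure of the rational polynomials is a point-separating algebra of
    continuous functions, so Stone-Weierstrass applies to it.\<close>
  define R where "R = {h. \<exists>ps. uniform_limit S (\<lambda>n. rat_poly_eval (ps n)) h sequentially}"
  have R_intro: "h \<in> R" if "uniform_limit S (\<lambda>n. rat_poly_eval (ps n)) h sequentially" for h ps
    using that unfolding R_def by blast
  have R_continuous: "continuous_on S h" if "h \<in> R" for h
  proof -
    from that obtain ps where "uniform_limit S (\<lambda>n. rat_poly_eval (ps n)) h sequentially"
      by (auto simp: R_def)
    then show ?thesis
      by (intro uniform_limit_theorem[OF always_eventually]) (auto intro: continuous_on_rat_poly_eval)
  qed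
  have R_bounded: "bounded (h ` S)" if "h \<in> R" for h
    using R_continuous[OF that] S by (simp add: compact_continuous_image compact_imp_bounded)
  interpret function_ring_on R S
  proof
    show "(\<lambda>x. h x + k x) \<in> R" if "h \<in> R" "k \<in> R" for h k
    proof -
      from that obtain ps qs where
        "uniform_limit S (\<lambda>n. rat_poly_eval (ps n)) h sequentially"
        "uniform_limit S (\<lambda>n. rat_poly_eval (qs n)) k sequentially"
        by (auto simp: R_def)
      then have "uniform_limit S (\<lambda>n x. rat_poly_eval (Add (ps n) (qs n)) x) (\<lambda>x. h x + k x) sequentially"
        by (simp add: uniform_limit_add)
      then show ?thesis by (rule R_intro)
    qed
    show "(\<lambda>x. h x * k x) \<in> R" if "h \<in> R" "k \<in> R" for h k
    proof -
      from that obtain ps qs where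
        "uniform_limit S (\<lambda>n. rat_poly_eval (ps n)) h sequentially"
        "uniform_limit S (\<lambda>n. rat_poly_eval (qs n)) k sequentially"
        by (auto simp: R_def)
      then have "uniform_limit S (\<lambda>n x. rat_poly_eval (ps n) x * rat_poly_eval (qs n) x) (\<lambda>x. h x * k x) sequentially"
        using R_bounded that by (intro uniform_lim_mult)
      then have "uniform_limit S (\<lambda>n x. rat_poly_eval (Mult (ps n) (qs n)) x) (\<lambda>x. h x * k x) sequentially"
        by simp
      then show ?thesis by (rule R_intro)
    qed
    show "(\<lambda>_. c) \<in> R" for c
    proof -
      obtain qs where "\<And>n. qs n \<in> \<rat>" "qs \<longlonglongrightarrow> c"
        using closure_sequential[of c \<rat>] by (auto simp: Rats_closure_real)
      moreover have "\<forall>n. \<exists>r. qs n = of_rat r"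
        using \<open>\<And>n. qs n \<in> \<rat>\<close> by (auto simp: Rats_def)
      then obtain rs where "\<And>n. qs n = of_rat (rs n)"
        by metis
      ultimately have "\<forall>e>0. \<forall>\<^sub>F n in sequentially. dist (of_rat (rs n)) c < e"
        by (simp add: tendsto_iff)
      then have "uniform_limit S (\<lambda>n x. rat_poly_eval (Const (rs n)) x) (\<lambda>_. c) sequentially"
        by (auto simp: uniform_limit_iff elim!: eventually_mono)
      then show ?thesis by (rule R_intro)
    qed
    show "\<exists>h\<in>R. h x \<noteq> h y" if "x \<noteq> y" for x y
    proof -
      obtain b where "b \<in> Basis" "x \<bullet> b \<noteq> y \<bullet> b"
        using \<open>x \<noteq> y\<close> euclidean_eqI by blast
      moreover obtain n where "from_nat_into Basis n = b"
        using from_nat_into_surj[OF countable_finite[OF finite_Basis] \<open>b \<in> Basis\<close>] by blast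
      moreover have "rat_poly_eval (Coord n) \<in> R"
        by (rule R_intro) (rule uniform_limit_const)
      ultimately show ?thesis by (metis rat_poly_eval.simps(2))
    qed
  qed (use S R_continuous in auto)
  obtain h where "h \<in> R" and h: "\<And>x. x \<in> S \<Longrightarrow> \<bar>g x - h x\<bar> < e / 2"
    using Stone_Weierstrass_basic[OF g] e by (metis half_gt_zero)
  then obtain ps where "uniform_limit S (\<lambda>n. rat_poly_eval (ps n)) h sequentially"
    by (auto simp: R_def)
  then obtain n where n: "\<And>x. x \<in> S \<Longrightarrow> dist (rat_poly_eval (ps n) x) (h x) < e / 2"
    using e unfolding uniform_limit_sequentially_iff by (meson half_gt_zero order_refl)
  have "\<bar>g x - rat_poly_eval (ps n) x\<bar> < e" if "x \<in> S" for x
    using h[OF that] n[OF that] unfolding dist_real_def by linarith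
  then show ?thesis by (rule that)
qed

lemma integrable_continuous_on_compact:
  fixes \<phi> :: "'a::metric_space \<Rightarrow> real"
  assumes "finite_measure \<mu>" "sets \<mu> = sets (Mborel M)" "compact M" "continuous_on M \<phi>"
  shows "integrable \<mu> \<phi>"
proof -
  interpret finite_measure \<mu> by fact
  have space: "space \<mu> = M"
    using sets_eq_imp_space_eq[OF assms(2)] by (simp add: space_restrict_space)
  obtain B where "\<And>x. x \<in> M \<Longrightarrow> norm (\<phi> x) \<le> B"
    using compact_imp_bounded[OF compact_continuous_image[OF assms(4,3)]] by (auto simp: bounded_iff)
  moreover have "\<phi> \<in> borel_measurable \<mu>"
    using borel_measurable_continuous_on_restrict[OF assms(4)] measurable_cong_sets[OF assms(2) refl] by blast
  ultimately show ?thesis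
    by (intro integrable_const_bound[where B = B]) (auto simp: space)
qed

lemma abs_mean_le:
  fixes u :: "nat \<Rightarrow> real"
  assumes "\<And>j. \<bar>u j\<bar> \<le> e" "0 \<le> e"
  shows "\<bar>(\<Sum>j<k. u j) / real k\<bar> \<le> e"
proof (cases "k = 0")
  case False
  have "\<bar>\<Sum>j<k. u j\<bar> \<le> real k * e"
    using order.trans[OF sum_abs sum_bounded_above[of "{..<k}" "\<lambda>j. \<bar>u j\<bar>" e]] assms(1) by simp
  with False show ?thesis by (simp add: field_simps)
qed (use assms in simp)

lemma tendsto_of_uniform_approximations:
  fixes a :: "nat \<Rightarrow> real"
  assumes "\<And>e. e > 0 \<Longrightarrow> \<exists>b L'. b \<longlonglongrightarrow> L' \<and> \<bar>L - L'\<bar> \<le> e \<and> (\<forall>k. \<bar>a k - b k\<bar> \<le> e)"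
  shows "a \<longlonglongrightarrow> L"
proof (rule LIMSEQ_I)
  fix r :: real assume "r > 0"
  then obtain b L' where b: "b \<longlonglongrightarrow> L'" and L': "\<bar>L - L'\<bar> \<le> r / 4" and ab: "\<And>k. \<bar>a k - b k\<bar> \<le> r / 4"
    using assms[of "r / 4"] by auto
  obtain N where N: "\<And>k. k \<ge> N \<Longrightarrow> \<bar>b k - L'\<bar> < r / 4"
    using LIMSEQ_D[OF b, of "r / 4"] \<open>r > 0\<close> by auto
  have "\<bar>a k - L\<bar> < r" if "k \<ge> N" for k
    using N[OF that] ab[of k] L' by arith
  then show "\<exists>N. \<forall>k\<ge>N. norm (a k - L) < r" by auto
qed

lemma Cesaro_mean_of_Suc:
  fixes a :: "nat \<Rightarrow> real"
  assumes "(\<lambda>k. (\<Sum>j<k. a (Suc j)) / real k) \<longlonglongrightarrow> L"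
  shows "(\<lambda>k. (\<Sum>j<k. a j) / real k) \<longlonglongrightarrow> L"
proof (rule LIMSEQ_imp_Suc)
  have "(\<Sum>j<Suc k. a j) / real (Suc k)
      = a 0 / real (Suc k) + (\<Sum>j<k. a (Suc j)) / real k * (real k / real (Suc k))" for k
    by (cases "k = 0") (simp_all add: sum.lessThan_Suc_shift add_divide_distrib del: sum.lessThan_Suc)
  moreover have "(\<lambda>k. a 0 / real (Suc k) + (\<Sum>j<k. a (Suc j)) / real k * (real k / real (Suc k)))
      \<longlonglongrightarrow> 0 + L * 1"
    by (intro tendsto_intros assms LIMSEQ_n_over_Suc_n LIMSEQ_Suc[OF lim_const_over_n])
  ultimately show "(\<lambda>k. (\<Sum>j<Suc k. a j) / real (Suc k)) \<longlonglongrightarrow> L"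
    by simp
qed

lemma averages_tendsto_integral_iff_rat_poly:
  fixes M :: "'a::euclidean_space set" and xs :: "nat \<Rightarrow> 'a"
  assumes M: "compact M" and \<mu>: "prob_space \<mu>" "sets \<mu> = sets (Mborel M)" and xs: "range xs \<subseteq> M"
  shows "(\<forall>\<phi>. continuous_on M \<phi> \<longrightarrow> (\<lambda>k. (\<Sum>j<k. \<phi> (xs j)) / real k) \<longlonglongrightarrow> (\<integral>y. \<phi> y \<partial>\<mu>)) \<longleftrightarrow>
         (\<forall>p. (\<lambda>k. (\<Sum>j<k. rat_poly_eval p (xs j)) / real k) \<longlonglongrightarrow> (\<integral>y. rat_poly_eval p y \<partial>\<mu>))"
proof (intro iffI allI impI)
  fix \<phi> :: "'a \<Rightarrow> real"
  assume poly: "\<forall>p. (\<lambda>k. (\<Sum>j<k. rat_poly_eval p (xs j)) / real k) \<longlonglongrightarrow> (\<integral>y. rat_poly_eval p y \<partial>\<mu>)"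
    and \<phi>: "continuous_on M \<phi>"
  interpret prob_space \<mu> by fact
  have space: "space \<mu> = M"
    using sets_eq_imp_space_eq[OF \<mu>(2)] by (simp add: space_restrict_space)
  show "(\<lambda>k. (\<Sum>j<k. \<phi> (xs j)) / real k) \<longlonglongrightarrow> (\<integral>y. \<phi> y \<partial>\<mu>)"
  proof (rule tendsto_of_uniform_approximations)
    fix e :: real assume "e > 0"
    then obtain p where p: "\<And>x. x \<in> M \<Longrightarrow> \<bar>\<phi> x - rat_poly_eval p x\<bar> < e"
      using rat_poly_dense[OF M \<phi>] by blast
    have "\<bar>(\<integral>y. \<phi> y \<partial>\<mu>) - (\<integral>y. rat_poly_eval p y \<partial>\<mu>)\<bar> \<le> e"
    proof -
      have "integrable \<mu> \<phi>" "integrable \<mu> (rat_poly_eval p)"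
        using integrable_continuous_on_compact[OF finite_measure_axioms \<mu>(2) M] \<phi>
          continuous_on_rat_poly_eval by auto
      then have "\<bar>(\<integral>y. \<phi> y \<partial>\<mu>) - (\<integral>y. rat_poly_eval p y \<partial>\<mu>)\<bar>
          \<le> (\<integral>y. \<bar>\<phi> y - rat_poly_eval p y\<bar> \<partial>\<mu>)"
        by (simp flip: Bochner_Integration.integral_diff)
      also have "\<dots> \<le> e"
        using p \<open>integrable \<mu> \<phi>\<close> \<open>integrable \<mu> (rat_poly_eval p)\<close>
        by (intro integral_le_const AE_I2) (auto simp: space less_imp_le)
      finally show ?thesis .
    qed
    moreover have "\<bar>\<phi> (xs j) - rat_poly_eval p (xs j)\<bar> \<le> e" for j
      using p xs by (meson less_imp_le rangeI subsetD)
    then have "\<bar>(\<Sum>j<k. \<phi> (xs j)) / real k - (\<Sum>j<k. rat_poly_eval p (xs j)) / real k\<bar> \<le> e" for k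
      using abs_mean_le[of "\<lambda>j. \<phi> (xs j) - rat_poly_eval p (xs j)" e k] \<open>e > 0\<close>
      by (simp add: sum_subtractf diff_divide_distrib)
    ultimately show "\<exists>b L'. b \<longlonglongrightarrow> L' \<and> \<bar>(\<integral>y. \<phi> y \<partial>\<mu>) - L'\<bar> \<le> e \<and>
        (\<forall>k. \<bar>(\<Sum>j<k. \<phi> (xs j)) / real k - b k\<bar> \<le> e)"
      using poly by blast
  qed
qed (use continuous_on_rat_poly_eval in blast)

section \<open>Measure theory and topology\<close>

lemma sets_Collect_AE_Pair:
  assumes "sigma_finite_measure N" and P: "Measurable.pred (M \<Otimes>\<^sub>M N) (\<lambda>z. P (fst z) (snd z))"
  shows "{x \<in> space M. AE y in N. P x y} \<in> sets M"
proof -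
  interpret N: sigma_finite_measure N by fact
  define Q where "Q = {z \<in> space (M \<Otimes>\<^sub>M N). \<not> P (fst z) (snd z)}"
  have Q: "Q \<in> sets (M \<Otimes>\<^sub>M N)"
    unfolding Q_def using P by measurable
  have "(AE y in N. P x y) \<longleftrightarrow> emeasure N (Pair x -` Q) = 0" if "x \<in> space M" for x
    using that by (intro AE_iff_measurable sets_Pair1[OF Q]) (auto simp: Q_def space_pair_measure)
  then have "{x \<in> space M. AE y in N. P x y} = {x \<in> space M. emeasure N (Pair x -` Q) = 0}"
    by blast
  also have "\<dots> \<in> sets M"
    using N.measurable_emeasure_Pair[OF Q] by measurable
  finally show ?thesis .
qed

text \<open>First-step analysis: an i.i.d. sequence is distributed as an independent first entry followed
  by an i.i.d. sequence.\<close>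

lemma (in sequence_space) AE_of_AE_case_nat:
  assumes [measurable]: "Measurable.pred S P" and "AE s in M. AE \<omega> in S. P (case_nat s \<omega>)"
  shows "AE \<omega> in S. P \<omega>"
proof -
  interpret MS: pair_sigma_finite M S
    by unfold_locales
  have "AE z in M \<Otimes>\<^sub>M S. P (case_nat (fst z) (snd z))"
    using assms(2) by (intro MS.AE_pair_measure) auto
  then have "AE \<omega> in distr (M \<Otimes>\<^sub>M S) S (\<lambda>(s, \<omega>). case_nat s \<omega>). P \<omega>"
    by (subst AE_distr_iff) (auto simp: case_prod_beta)
  then show ?thesis
    by (simp only: PiM_iter)
qed

lemma measure_diff_tendsto_zero:
  assumes "finite_measure m" and W: "W \<in> sets m"
    and G: "\<And>n. G n \<in> sets m" "incseq G" "W \<subseteq> (\<Union>n. G n)"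
    and eventually_subset: "\<And>n. eventually (\<lambda>\<epsilon>. G n \<subseteq> B \<epsilon>) F"
  shows "((\<lambda>\<epsilon>. measure m (W - B \<epsilon>)) \<longlongrightarrow> 0) F"
proof (rule tendstoI)
  interpret finite_measure m by fact
  fix r :: real
  assume "r > 0"
  have "(\<Inter>n. W - G n) = {}"
    using G(3) by blast
  moreover have "(\<lambda>n. measure m (W - G n)) \<longlonglongrightarrow> measure m (\<Inter>n. W - G n)"
    using W G(1,2) by (intro finite_Lim_measure_decseq) (auto simp: decseq_def incseq_def)
  ultimately have "(\<lambda>n. measure m (W - G n)) \<longlonglongrightarrow> 0"
    by (simp only: measure_empty)
  then have "eventually (\<lambda>n. measure m (W - G n) < r) sequentially"
    using \<open>r > 0\<close> by (rule order_tendstoD)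
  then obtain n where n: "measure m (W - G n) < r"
    by (auto simp: eventually_sequentially)
  from eventually_subset[of n] show "eventually (\<lambda>\<epsilon>. dist (measure m (W - B \<epsilon>)) 0 < r) F"
  proof eventually_elim
    case (elim \<epsilon>)
    then have "measure m (W - B \<epsilon>) \<le> measure m (W - G n)"
      using W G(1) by (intro finite_measure_mono) auto
    with n show ?case
      by simp
  qed
qed

lemma infdist_nbhd_subset_openin:
  fixes K :: "'a::heine_borel set"
  assumes K: "compact K" "K \<noteq> {}" and U: "K \<subseteq> U" "openin (top_of_set M) U"
  obtains \<delta> where "\<delta> > 0" "\<And>y. y \<in> M \<Longrightarrow> infdist y K < \<delta> \<Longrightarrow> y \<in> U"
proof -
  obtain V where "open V" "U = M \<inter> V"
    using U(2) by (auto simp: openin_open)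
  moreover obtain \<delta> where "\<delta> > 0" and \<delta>: "\<And>x. x \<in> K \<Longrightarrow> ball x \<delta> \<subseteq> V"
    using Heine_Borel_lemma[OF K(1), of "{V}"] U(1) \<open>open V\<close> \<open>U = M \<inter> V\<close> by auto
  moreover have "y \<in> V" if "infdist y K < \<delta>" for y
  proof -
    obtain x where "x \<in> K" "infdist y K = dist y x"
      using infdist_attains_inf[OF compact_imp_closed[OF K(1)] K(2)] by blast
    with that have "y \<in> ball x \<delta>"
      by (simp add: dist_commute)
    with \<delta>[OF \<open>x \<in> K\<close>] show ?thesis
      by blast
  qed
  ultimately show ?thesis
    using that by blast
qed

lemma C1_on_imp_continuous_on: "C1_on U h \<Longrightarrow> continuous_on U h"
  unfolding C1_on_def by (meson continuous_at_imp_continuous_on has_derivative_continuous)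

lemma continuous_on_Times_if_charts:
  fixes M :: "'k::euclidean_space set" and G :: "'k \<Rightarrow> 'n::metric_space \<Rightarrow> 'b::topological_space"
  assumes charts_cover: "\<And>p. p \<in> M \<Longrightarrow> \<exists>U (\<phi>::real^'d \<Rightarrow> 'k). chart M U \<phi> \<and> p \<in> \<phi> ` U"
    and continuous_in_charts: "\<And>U (\<phi>::real^'d \<Rightarrow> 'k). chart M U \<phi> \<Longrightarrow> continuous_on (U \<times> T) (\<lambda>(u, t). G (\<phi> u) t)"
  shows "continuous_on (M \<times> T) (\<lambda>(x, t). G x t)"
proof (rule continuous_on_eq_continuous_within[THEN iffD2], intro ballI)
  fix z
  assume "z \<in> M \<times> T"
  then obtain U and \<phi> :: "real^'d \<Rightarrow> 'k" where "chart M U \<phi>" and z: "z \<in> \<phi> ` U \<times> T"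
    using charts_cover by fastforce
  then have "continuous_on (\<phi> ` U) (inv_into U \<phi>)" and "openin (top_of_set M) (\<phi> ` U)"
    by (auto simp: chart_def)
  then obtain V where "open V" and V: "\<phi> ` U = M \<inter> V"
    by (auto simp: openin_open)
  have "continuous_on (\<phi> ` U \<times> T) (\<lambda>z. (inv_into U \<phi> (fst z), snd z))"
    by (intro continuous_intros continuous_on_compose2[OF \<open>continuous_on (\<phi> ` U) (inv_into U \<phi>)\<close>]) auto
  moreover have "(\<lambda>z. (inv_into U \<phi> (fst z), snd z)) ` (\<phi> ` U \<times> T) \<subseteq> U \<times> T"
    by (auto intro: inv_into_into)
  ultimately have "continuous_on (\<phi> ` U \<times> T) (\<lambda>z. (\<lambda>(u, t). G (\<phi> u) t) (inv_into U \<phi> (fst z), snd z))"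
    by (rule continuous_on_compose2[OF continuous_in_charts[OF \<open>chart M U \<phi>\<close>]])
  then have "continuous_on (\<phi> ` U \<times> T) (\<lambda>(x, t). G x t)"
    by (rule continuous_on_eq) (auto simp: f_inv_into_f)
  then have "continuous (at z within \<phi> ` U \<times> T) (\<lambda>(x, t). G x t)"
    using z continuous_on_eq_continuous_within by blast
  moreover have "at z within \<phi> ` U \<times> T = at z within M \<times> T"
    using z V \<open>open V\<close> by (intro at_within_nhd[where S = "V \<times> UNIV"]) (auto simp: open_Times)
  ultimately show "continuous (at z within M \<times> T) (\<lambda>(x, t). G x t)"
    by simp
qed

section \<open>The noise and the random orbits\<close>

lemma space_nu [simp]: "space (nu \<epsilon> :: 'n::euclidean_space measure) = cball 0 \<epsilon>"
  by (simp add: nu_def space_restrict_space)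

lemma prob_space_nu:
  assumes "\<epsilon> > 0" shows "prob_space (nu \<epsilon> :: 'n::euclidean_space measure)"
proof -
  have "unit_ball_vol (real DIM('n)) \<noteq> 0"
    using unit_ball_vol_pos[OF of_nat_0_le_iff[of "DIM('n)"]] by linarith
  with assms have "emeasure lborel (cball (0::'n) \<epsilon>) \<noteq> 0"
    by (simp add: emeasure_cball)
  then show ?thesis
    unfolding nu_def using emeasure_lborel_cball_finite[of "0::'n" \<epsilon>]
    by (intro prob_space_restrict_space emeasure_uniform_measure_1) auto
qed

lemma sequence_space_nu: "\<epsilon> > 0 \<Longrightarrow> sequence_space (nu \<epsilon> :: 'n::euclidean_space measure)"
  by (simp add: sequence_space_def product_prob_space_def product_prob_space_axioms_def
      product_sigma_finite_def prob_space_imp_sigma_finite prob_space_nu)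

lemma prob_space_noise: "\<epsilon> > 0 \<Longrightarrow> prob_space (noise \<epsilon> :: (nat \<Rightarrow> 'n::euclidean_space) measure)"
  unfolding noise_def by (intro prob_space_PiM prob_space_nu)

lemma space_noise [simp]: "space (noise \<epsilon> :: (nat \<Rightarrow> 'n::euclidean_space) measure) = {t. \<forall>l. norm (t l) \<le> \<epsilon>}"
  by (auto simp: noise_def space_PiM)

lemma measurable_noise_component [measurable]:
  "(\<lambda>t. t j) \<in> borel_measurable (noise \<epsilon> :: (nat \<Rightarrow> 'n::euclidean_space) measure)"
proof -
  have "(\<lambda>s. s) \<in> borel_measurable (nu \<epsilon> :: 'n measure)"
    unfolding nu_def by (rule measurable_restrict_space1) simp
  then show ?thesis
    unfolding noise_def by (rule measurable_compose[rotated]) simp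
qed

lemma itF_case_nat: "itF F (Suc j) x (case_nat s \<omega>) = itF F j (F x s) \<omega>"
  by (induction j) auto

lemma emp_conv_case_nat:
  assumes "emp_conv M F (F x s) \<omega> \<mu>"
  shows "emp_conv M F x (case_nat s \<omega>) \<mu>"
  unfolding emp_conv_def
proof (intro allI impI)
  fix \<phi> :: "'a \<Rightarrow> real"
  assume "continuous_on M \<phi>"
  with assms have "(\<lambda>k. (\<Sum>j<k. \<phi> (itF F j (F x s) \<omega>)) / real k) \<longlonglongrightarrow> (\<integral>y. \<phi> y \<partial>\<mu>)"
    unfolding emp_conv_def by blast
  then show "(\<lambda>k. (\<Sum>j<k. \<phi> (itF F j x (case_nat s \<omega>))) / real k) \<longlonglongrightarrow> (\<integral>y. \<phi> y \<partial>\<mu>)"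
    using Cesaro_mean_of_Suc[of "\<lambda>j. \<phi> (itF F j x (case_nat s \<omega>))"] by (simp only: itF_case_nat)
qed

locale random_map =
  fixes M :: "'k::euclidean_space set" and F :: "'k \<Rightarrow> 'n::euclidean_space \<Rightarrow> 'k"
  assumes compact_M: "compact M"
    and continuous_F: "continuous_on (M \<times> ball 0 1) (\<lambda>(x, t). F x t)"
    and F_in_M: "\<And>x t. x \<in> M \<Longrightarrow> t \<in> ball 0 1 \<Longrightarrow> F x t \<in> M"
begin

lemma itF_in_M: "x \<in> M \<Longrightarrow> (\<And>l. norm (t l) < 1) \<Longrightarrow> itF F j x t \<in> M"
  by (induction j) (auto intro: F_in_M)

lemma itF_in_M_noise: "x \<in> M \<Longrightarrow> t \<in> space (noise \<epsilon>) \<Longrightarrow> \<epsilon> < 1 \<Longrightarrow> itF F j x t \<in> M"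
  by (rule itF_in_M) (auto intro: le_less_trans)

lemma measurable_itF:
  assumes "\<epsilon> < 1"
  shows "(\<lambda>z. itF F j (fst z) (snd z)) \<in> borel_measurable (Mborel M \<Otimes>\<^sub>M noise \<epsilon>)"
proof (induction j)
  case 0
  have "(\<lambda>x. x) \<in> borel_measurable (Mborel M)"
    by (rule measurable_restrict_space1) simp
  from measurable_compose[OF measurable_fst this] show ?case
    by simp
next
  case (Suc j)
  let ?step = "\<lambda>z. (itF F j (fst z) (snd z), snd z j)"
  have "?step \<in> borel_measurable (Mborel M \<Otimes>\<^sub>M noise \<epsilon>)"
    unfolding borel_prod[symmetric] using Suc by measurable
  moreover have "?step z \<in> M \<times> ball 0 1" if "z \<in> space (Mborel M \<Otimes>\<^sub>M noise \<epsilon>)" for z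
    using that assms itF_in_M_noise[of "fst z" "snd z" \<epsilon> j]
    by (fastforce simp: space_pair_measure space_restrict_space intro: le_less_trans)
  ultimately have "?step \<in> measurable (Mborel M \<Otimes>\<^sub>M noise \<epsilon>) (restrict_space borel (M \<times> ball 0 1))"
    by (intro measurable_restrict_space2) auto
  moreover have "(\<lambda>(x, t). F x t) \<in> borel_measurable (restrict_space borel (M \<times> ball 0 1))"
    by (rule borel_measurable_continuous_on_restrict[OF continuous_F])
  ultimately have "(\<lambda>z. (\<lambda>(x, t). F x t) (?step z)) \<in> borel_measurable (Mborel M \<Otimes>\<^sub>M noise \<epsilon>)"
    by (rule measurable_compose)
  then show ?case
    by simp
qed

lemma pred_emp_conv:
  assumes \<mu>: "prob_space \<mu>" "sets \<mu> = sets (Mborel M)" and "\<epsilon> < 1"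
  shows "Measurable.pred (Mborel M \<Otimes>\<^sub>M noise \<epsilon>) (\<lambda>z. emp_conv M F (fst z) (snd z) \<mu>)"
proof -
  note [measurable] = measurable_itF[OF \<open>\<epsilon> < 1\<close>]
  have "emp_conv M F (fst z) (snd z) \<mu> \<longleftrightarrow>
      (\<forall>p. (\<lambda>k. (\<Sum>j<k. rat_poly_eval p (itF F j (fst z) (snd z))) / real k)
             \<longlonglongrightarrow> (\<integral>y. rat_poly_eval p y \<partial>\<mu>))"
    if "z \<in> space (Mborel M \<Otimes>\<^sub>M noise \<epsilon>)" for z
  proof -
    have "range (\<lambda>j. itF F j (fst z) (snd z)) \<subseteq> M"
      using that \<open>\<epsilon> < 1\<close>
      by (auto simp: space_pair_measure space_restrict_space intro!: itF_in_M_noise)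
    then show ?thesis
      unfolding emp_conv_def by (rule averages_tendsto_integral_iff_rat_poly[OF compact_M \<mu>])
  qed
  then show ?thesis
    by (rule measurable_cong[THEN iffD2]) measurable
qed

lemma sets_basin:
  assumes "prob_space \<mu>" "sets \<mu> = sets (Mborel M)" "0 < \<epsilon>" "\<epsilon> < 1"
  shows "basin M F \<epsilon> \<mu> \<in> sets (Mborel M)"
proof -
  have "basin M F \<epsilon> \<mu> = {x \<in> space (Mborel M). AE t in noise \<epsilon>. emp_conv M F x t \<mu>}"
    by (simp add: basin_def space_restrict_space)
  also have "\<dots> \<in> sets (Mborel M)"
    using assms prob_space_noise pred_emp_conv
    by (intro sets_Collect_AE_Pair prob_space_imp_sigma_finite) auto
  finally show ?thesis .
qed

lemma AE_emp_conv_first_step: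
  assumes \<mu>: "prob_space \<mu>" "sets \<mu> = sets (Mborel M)" and \<epsilon>: "0 < \<epsilon>" "\<epsilon> < 1" and "x \<in> M"
    and step: "\<And>s. s \<in> cball 0 \<epsilon> \<Longrightarrow> AE \<omega> in noise \<epsilon>. emp_conv M F (F x s) \<omega> \<mu>"
  shows "AE t in noise \<epsilon>. emp_conv M F x t \<mu>"
proof -
  interpret sequence_space "nu \<epsilon> :: 'n measure"
    using \<epsilon>(1) by (rule sequence_space_nu)
  have "Measurable.pred (noise \<epsilon>) (\<lambda>t. emp_conv M F x t \<mu>)"
    using measurable_compose[OF measurable_Pair1' pred_emp_conv[OF \<mu> \<epsilon>(2)]] \<open>x \<in> M\<close>
    by (simp add: space_restrict_space)
  moreover have "AE s in nu \<epsilon>. AE \<omega> in noise \<epsilon>. emp_conv M F x (case_nat s \<omega>) \<mu>"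
  proof (rule AE_I2)
    fix s :: 'n
    assume "s \<in> space (nu \<epsilon>)"
    with step have "AE \<omega> in noise \<epsilon>. emp_conv M F (F x s) \<omega> \<mu>"
      by simp
    then show "AE \<omega> in noise \<epsilon>. emp_conv M F x (case_nat s \<omega>) \<mu>"
      by eventually_elim (rule emp_conv_case_nat)
  qed
  ultimately show ?thesis
    unfolding noise_def by (rule AE_of_AE_case_nat)
qed

lemma AE_emp_conv_if_orbits_enter:
  assumes \<mu>: "prob_space \<mu>" "sets \<mu> = sets (Mborel M)" and \<epsilon>: "0 < \<epsilon>" "\<epsilon> < 1"
    and stationary: "\<And>y. y \<in> U \<Longrightarrow> AE t in noise \<epsilon>. emp_conv M F y t \<mu>"
  shows "x \<in> M \<Longrightarrow> (\<And>t. t \<in> space (noise \<epsilon>) \<Longrightarrow> itF F k x t \<in> U) \<Longrightarrow>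
    AE t in noise \<epsilon>. emp_conv M F x t \<mu>"
proof (induction k arbitrary: x)
  case 0
  have "(\<lambda>_. 0 :: 'n) \<in> space (noise \<epsilon>)"
    using \<epsilon> by simp
  from "0.prems"(2)[OF this] have "x \<in> U"
    by simp
  then show ?case
    by (rule stationary)
next
  case (Suc k)
  show ?case
  proof (rule AE_emp_conv_first_step[OF \<mu> \<epsilon> \<open>x \<in> M\<close>])
    fix s :: 'n
    assume s: "s \<in> cball 0 \<epsilon>"
    have "F x s \<in> M"
      using s \<epsilon> \<open>x \<in> M\<close> by (intro F_in_M) auto
    moreover have "itF F k (F x s) \<omega> \<in> U" if "\<omega> \<in> space (noise \<epsilon>)" for \<omega>
    proof -
      have "case_nat s \<omega> \<in> space (noise \<epsilon>)"
        using s that by (simp split: nat.split)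
      then show ?thesis
        using Suc.prems(2) by (simp only: itF_case_nat[symmetric])
    qed
    ultimately show "AE \<omega> in noise \<epsilon>. emp_conv M F (F x s) \<omega> \<mu>"
      by (rule Suc.IH)
  qed
qed

end

section \<open>Small perturbations of a map\<close>

locale random_perturbation = random_map M F
  for M :: "'k::euclidean_space set" and F :: "'k \<Rightarrow> 'n::euclidean_space \<Rightarrow> 'k" +
  fixes f :: "'k \<Rightarrow> 'k"
  assumes F_zero: "\<And>x. x \<in> M \<Longrightarrow> F x 0 = f x"
begin

lemma funpow_in_M: "x \<in> M \<Longrightarrow> (f ^^ k) x \<in> M"
  by (induction k) (auto simp flip: F_zero intro: F_in_M)

lemma continuous_on_f: "continuous_on M f"
proof -
  have "continuous_on M (\<lambda>x. (\<lambda>(x, t). F x t) (x, 0::'n))"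
    by (rule continuous_on_compose2[OF continuous_F]) (auto intro!: continuous_intros)
  then show ?thesis
    by (rule continuous_on_eq) (simp add: F_zero)
qed

lemma measurable_funpow: "(f ^^ k) \<in> measurable (Mborel M) (Mborel M)"
proof (induction k)
  case (Suc k)
  have "f \<in> measurable (Mborel M) (Mborel M)"
    using funpow_in_M[of _ 1]
    by (intro measurable_restrict_space2 borel_measurable_continuous_on_restrict continuous_on_f)
      (auto simp: space_restrict_space)
  with Suc show ?case
    by (simp add: measurable_compose[where f = "f ^^ k"] comp_def)
qed simp

lemma borel_measurable_infdist_funpow [measurable]:
  "(\<lambda>x. infdist ((f ^^ k) x) A) \<in> borel_measurable (Mborel M)"
proof -
  have "(\<lambda>y. infdist y A) \<in> borel_measurable (Mborel M)"
    by (intro measurable_restrict_space1 borel_measurable_continuous_onI continuous_intros)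
  then show ?thesis
    using measurable_compose[OF measurable_funpow] by blast
qed

lemma sets_Ws: "Ws M f \<Lambda> \<in> sets (Mborel M)"
proof -
  have "Measurable.pred (Mborel M) (\<lambda>x. (\<lambda>k. infdist ((f ^^ k) x) \<Lambda>) \<longlonglongrightarrow> 0)"
    by measurable
  then show ?thesis
    by (simp add: Ws_def pred_def space_restrict_space)
qed

definition orbit_tracking :: "nat \<Rightarrow> real \<Rightarrow> real \<Rightarrow> bool" where
  "orbit_tracking k \<eta> \<delta> \<longleftrightarrow>
     (\<forall>x\<in>M. \<forall>t. (\<forall>l. norm (t l) \<le> \<eta>) \<longrightarrow> dist (itF F k x t) ((f ^^ k) x) < \<delta>)"

lemma orbit_tracking_antimono: "orbit_tracking k \<eta> \<delta> \<Longrightarrow> \<eta>' \<le> \<eta> \<Longrightarrow> orbit_tracking k \<eta>' \<delta>"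
  unfolding orbit_tracking_def by (meson order.trans)

lemma orbit_tracking_exists:
  assumes "\<delta> > 0"
  obtains \<eta> where "\<eta> > 0" "orbit_tracking k \<eta> \<delta>"
proof -
  txt \<open>The bound 1/2 keeps the noise in the compact set cball 0 (1/2), where F is uniformly
    continuous.\<close>
  have "\<exists>\<eta>>0. \<eta> \<le> 1/2 \<and> orbit_tracking k \<eta> \<delta>" if "\<delta> > 0" for \<delta>
    using that
  proof (induction k arbitrary: \<delta>)
    case 0
    then show ?case
      by (auto simp: orbit_tracking_def intro!: exI[of _ "1/2"])
  next
    case (Suc k)
    let ?K = "M \<times> cball (0::'n) (1/2)"
    have "uniformly_continuous_on ?K (\<lambda>(x, t). F x t)"
      using compact_M by (intro compact_uniformly_continuous continuous_on_subset[OF continuous_F] compact_Times) auto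
    then obtain \<gamma> where "\<gamma> > 0" and \<gamma>: "\<And>z z'. z \<in> ?K \<Longrightarrow> z' \<in> ?K \<Longrightarrow> dist z' z < \<gamma> \<Longrightarrow>
        dist ((\<lambda>(x, t). F x t) z') ((\<lambda>(x, t). F x t) z) < \<delta>"
      using Suc.prems unfolding uniformly_continuous_on_def by metis
    obtain \<eta> where "\<eta> > 0" "\<eta> \<le> 1/2" and \<eta>: "orbit_tracking k \<eta> (\<gamma>/2)"
      using Suc.IH[of "\<gamma>/2"] \<open>\<gamma> > 0\<close> by auto
    have "orbit_tracking (Suc k) (min \<eta> (\<gamma>/2)) \<delta>"
      unfolding orbit_tracking_def
    proof (intro ballI allI impI)
      fix x and t :: "nat \<Rightarrow> 'n"
      assume "x \<in> M" and t: "\<forall>l. norm (t l) \<le> min \<eta> (\<gamma>/2)"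
      moreover have "norm (t l) < 1" for l
        using t[rule_format, of l] \<open>\<eta> \<le> 1/2\<close> by simp
      ultimately have "itF F k x t \<in> M" and "(f ^^ k) x \<in> M"
        by (auto intro!: itF_in_M funpow_in_M)
      moreover have "dist (itF F k x t, t k) ((f ^^ k) x, 0) < \<gamma>"
      proof -
        have "dist (itF F k x t) ((f ^^ k) x) < \<gamma>/2"
          using \<eta> t \<open>x \<in> M\<close> unfolding orbit_tracking_def by auto
        moreover have "norm (t k) \<le> \<gamma>/2"
          using t by auto
        moreover have "dist (itF F k x t, t k) ((f ^^ k) x, 0) \<le> dist (itF F k x t) ((f ^^ k) x) + dist (t k) 0"
          unfolding dist_Pair_Pair by (rule order.trans[OF sqrt_sum_squares_le_sum_abs]) simp
        ultimately show ?thesis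
          by simp
      qed
      moreover have "norm (t k) \<le> 1/2"
        using t \<open>\<eta> \<le> 1/2\<close> by (meson min.boundedE order.trans)
      ultimately have "dist (F (itF F k x t) (t k)) (F ((f ^^ k) x) 0) < \<delta>"
        using \<gamma>[of "((f ^^ k) x, 0)" "(itF F k x t, t k)"] by auto
      then show "dist (itF F (Suc k) x t) ((f ^^ Suc k) x) < \<delta>"
        using F_zero[OF \<open>(f ^^ k) x \<in> M\<close>] by simp
    qed
    then show ?case
      using \<open>\<eta> > 0\<close> \<open>\<eta> \<le> 1/2\<close> \<open>\<gamma> > 0\<close> by (intro exI[of _ "min \<eta> (\<gamma>/2)"]) auto
  qed
  then show ?thesis
    using assms that by blast
qed

lemma in_basin_if_orbit_tracking:
  assumes stat: "stat_meas M F \<epsilon> \<Lambda> U \<mu>" and \<epsilon>: "0 < \<epsilon>" "\<epsilon> < 1"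
    and U: "\<And>y. y \<in> M \<Longrightarrow> infdist y \<Lambda> < 2 * \<delta> \<Longrightarrow> y \<in> U"
    and x: "x \<in> M" "orbit_tracking k \<epsilon> \<delta>" "infdist ((f ^^ k) x) \<Lambda> < \<delta>"
  shows "x \<in> basin M F \<epsilon> \<mu>"
proof -
  have orbit_in_U: "itF F k x t \<in> U" if "t \<in> space (noise \<epsilon>)" for t
  proof (rule U)
    show "itF F k x t \<in> M"
      using x(1) that \<epsilon>(2) by (rule itF_in_M_noise)
    have "dist (itF F k x t) ((f ^^ k) x) < \<delta>"
      using x that unfolding orbit_tracking_def by simp
    then show "infdist (itF F k x t) \<Lambda> < 2 * \<delta>"
      using infdist_triangle[of "itF F k x t" \<Lambda> "(f ^^ k) x"] x(3) by simp
  qed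
  from stat have \<mu>: "prob_space \<mu>" "sets \<mu> = sets (Mborel M)"
    and stationary: "\<And>y. y \<in> U \<Longrightarrow> AE t in noise \<epsilon>. emp_conv M F y t \<mu>"
    unfolding stat_meas_def by auto
  have "AE t in noise \<epsilon>. emp_conv M F x t \<mu>"
    using \<mu> \<epsilon> stationary x(1) orbit_in_U by (rule AE_emp_conv_if_orbits_enter)
  with x(1) show ?thesis
    by (simp add: basin_def)
qed

lemma stable_set_exhaustion:
  assumes \<Lambda>: "compact \<Lambda>" "\<Lambda> \<noteq> {}" and U: "openin (top_of_set M) U" "\<Lambda> \<subseteq> U" and "\<epsilon>1 > 0"
    and stat: "\<And>\<epsilon>. 0 < \<epsilon> \<Longrightarrow> \<epsilon> < \<epsilon>1 \<Longrightarrow> stat_meas M F \<epsilon> \<Lambda> U (\<mu>e \<epsilon>)"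
  obtains G where "incseq G" "\<And>n. G n \<in> sets (Mborel M)" "Ws M f \<Lambda> \<subseteq> (\<Union>n. G n)"
    "\<And>n. \<forall>\<^sub>F \<epsilon> in at_right 0. G n \<subseteq> basin M F \<epsilon> (\<mu>e \<epsilon>)"
proof -
  obtain \<delta>' where "\<delta>' > 0" and \<delta>': "\<And>y. y \<in> M \<Longrightarrow> infdist y \<Lambda> < \<delta>' \<Longrightarrow> y \<in> U"
    using infdist_nbhd_subset_openin[OF \<Lambda> U(2,1)] by blast
  define \<delta> where "\<delta> = \<delta>' / 2"
  have "\<delta> > 0" and \<delta>: "\<And>y. y \<in> M \<Longrightarrow> infdist y \<Lambda> < 2 * \<delta> \<Longrightarrow> y \<in> U"
    using \<open>\<delta>' > 0\<close> \<delta>' by (auto simp: \<delta>_def)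
  define G where "G n = {x \<in> M. \<exists>k. orbit_tracking k (1 / Suc n) \<delta> \<and> infdist ((f ^^ k) x) \<Lambda> < \<delta>}" for n
  have "orbit_tracking k (1 / Suc n) \<delta>" if "orbit_tracking k (1 / Suc m) \<delta>" "m \<le> n" for k m n
    using orbit_tracking_antimono[OF that(1)] that(2) by (simp add: frac_le)
  then have "incseq G"
    unfolding incseq_def G_def by blast
  moreover have "G n \<in> sets (Mborel M)" for n
  proof -
    have "Measurable.pred (Mborel M) (\<lambda>x. \<exists>k. orbit_tracking k (1 / Suc n) \<delta> \<and> infdist ((f ^^ k) x) \<Lambda> < \<delta>)"
      by measurable
    then show ?thesis
      by (simp add: G_def pred_def space_restrict_space)
  qed
  moreover have "Ws M f \<Lambda> \<subseteq> (\<Union>n. G n)"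
  proof
    fix x
    assume "x \<in> Ws M f \<Lambda>"
    then have "x \<in> M" and "(\<lambda>k. infdist ((f ^^ k) x) \<Lambda>) \<longlonglongrightarrow> 0"
      by (auto simp: Ws_def)
    then have "eventually (\<lambda>k. infdist ((f ^^ k) x) \<Lambda> < \<delta>) sequentially"
      using \<open>\<delta> > 0\<close> by (intro order_tendstoD)
    then obtain k where k: "infdist ((f ^^ k) x) \<Lambda> < \<delta>"
      by (auto simp: eventually_sequentially)
    obtain \<eta> where "\<eta> > 0" "orbit_tracking k \<eta> \<delta>"
      using orbit_tracking_exists[OF \<open>\<delta> > 0\<close>] by blast
    moreover obtain n where "1 / Suc n < \<eta>"
      using reals_Archimedean[OF \<open>\<eta> > 0\<close>] by (auto simp: inverse_eq_divide)
    ultimately have "orbit_tracking k (1 / Suc n) \<delta>"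
      by (simp add: orbit_tracking_antimono)
    with \<open>x \<in> M\<close> k have "x \<in> G n"
      unfolding G_def by blast
    then show "x \<in> (\<Union>n. G n)"
      by blast
  qed
  moreover have "\<forall>\<^sub>F \<epsilon> in at_right 0. G n \<subseteq> basin M F \<epsilon> (\<mu>e \<epsilon>)" for n
    unfolding eventually_at_right_field
  proof (intro exI[of _ "min (1 / Suc n) \<epsilon>1"] conjI allI impI subsetI)
    show "0 < min (1 / real (Suc n)) \<epsilon>1"
      using \<open>\<epsilon>1 > 0\<close> by simp
    fix \<epsilon> x
    assume "0 < \<epsilon>" "\<epsilon> < min (1 / Suc n) \<epsilon>1" "x \<in> G n"
    then have "\<epsilon> < 1 / Suc n" "\<epsilon> < \<epsilon>1"
      by simp_all
    moreover have "1 / real (Suc n) \<le> 1"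
      by simp
    ultimately have "\<epsilon> < 1"
      by linarith
    from \<open>x \<in> G n\<close> obtain k where x: "x \<in> M" "orbit_tracking k (1 / Suc n) \<delta>" "infdist ((f ^^ k) x) \<Lambda> < \<delta>"
      by (auto simp: G_def)
    have "orbit_tracking k \<epsilon> \<delta>"
      using orbit_tracking_antimono[OF x(2)] \<open>\<epsilon> < 1 / Suc n\<close> by simp
    moreover have "stat_meas M F \<epsilon> \<Lambda> U (\<mu>e \<epsilon>)"
      using \<open>0 < \<epsilon>\<close> \<open>\<epsilon> < \<epsilon>1\<close> by (rule stat)
    ultimately show "x \<in> basin M F \<epsilon> (\<mu>e \<epsilon>)"
      using in_basin_if_orbit_tracking[OF _ \<open>0 < \<epsilon>\<close> \<open>\<epsilon> < 1\<close> \<delta> x(1) _ x(3)] by blast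
  qed
  ultimately show ?thesis
    using that by blast
qed

lemma stable_set_diff_basin:
  assumes m: "finite_measure m" "sets m = sets (Mborel M)"
    and \<Lambda>: "compact \<Lambda>" "\<Lambda> \<noteq> {}" and U: "openin (top_of_set M) U" "\<Lambda> \<subseteq> U" and "\<epsilon>1 > 0"
    and stat: "\<And>\<epsilon>. 0 < \<epsilon> \<Longrightarrow> \<epsilon> < \<epsilon>1 \<Longrightarrow> stat_meas M F \<epsilon> \<Lambda> U (\<mu>e \<epsilon>)"
  shows "(\<forall>\<^sub>F \<epsilon> in at_right 0. Ws M f \<Lambda> - basin M F \<epsilon> (\<mu>e \<epsilon>) \<in> sets m) \<and>
         ((\<lambda>\<epsilon>. measure m (Ws M f \<Lambda> - basin M F \<epsilon> (\<mu>e \<epsilon>))) \<longlongrightarrow> 0) (at_right 0)"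
proof
  have "basin M F \<epsilon> (\<mu>e \<epsilon>) \<in> sets m" if "0 < \<epsilon>" "\<epsilon> < min 1 \<epsilon>1" for \<epsilon>
    using stat[of \<epsilon>] that unfolding m(2) stat_meas_def by (intro sets_basin) auto
  then show "\<forall>\<^sub>F \<epsilon> in at_right 0. Ws M f \<Lambda> - basin M F \<epsilon> (\<mu>e \<epsilon>) \<in> sets m"
    unfolding eventually_at_right_field using \<open>0 < \<epsilon>1\<close> sets_Ws[of \<Lambda>] m(2)
    by (intro exI[of _ "min 1 \<epsilon>1"]) auto
  obtain G where "incseq G" "\<And>n. G n \<in> sets (Mborel M)" "Ws M f \<Lambda> \<subseteq> (\<Union>n. G n)"
      "\<And>n. \<forall>\<^sub>F \<epsilon> in at_right 0. G n \<subseteq> basin M F \<epsilon> (\<mu>e \<epsilon>)"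
    using stable_set_exhaustion[OF \<Lambda> U \<open>0 < \<epsilon>1\<close> stat] by blast
  then show "((\<lambda>\<epsilon>. measure m (Ws M f \<Lambda> - basin M F \<epsilon> (\<mu>e \<epsilon>))) \<longlongrightarrow> 0) (at_right 0)"
    using sets_Ws[of \<Lambda>] unfolding m(2)[symmetric] by (intro measure_diff_tendsto_zero[OF m(1)])
qed

end

lemma random_perturbation_if_phys_perturbation:
  fixes M :: "'k::euclidean_space set" and d :: "'d::finite itself" and F :: "'k \<Rightarrow> 'n::euclidean_space \<Rightarrow> 'k"
  assumes manifold: "compact_smooth_submanifold M d" and perturbation: "phys_perturbation M d m f F"
  shows "random_perturbation M F f"
proof
  have charts_cover: "\<And>p. p \<in> M \<Longrightarrow> \<exists>U (\<phi>::real^'d \<Rightarrow> 'k). chart M U \<phi> \<and> p \<in> \<phi> ` U"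
    using manifold by (simp add: compact_smooth_submanifold_def)
  have C1_in_charts: "\<And>U (\<phi>::real^'d \<Rightarrow> 'k). chart M U \<phi> \<Longrightarrow> C1_on (U \<times> ball 0 1) (\<lambda>(u, t). F (\<phi> u) t)"
    using perturbation by (simp add: phys_perturbation_def)
  show "compact M"
    using manifold by (simp add: compact_smooth_submanifold_def)
  show "continuous_on (M \<times> ball 0 1) (\<lambda>(x, t). F x t)"
    using charts_cover C1_on_imp_continuous_on[OF C1_in_charts] by (rule continuous_on_Times_if_charts)
  show "F x t \<in> M" if "x \<in> M" "t \<in> ball 0 1" for x t
    using perturbation that unfolding phys_perturbation_def by blast
  show "F x 0 = f x" if "x \<in> M" for x
    using perturbation that unfolding phys_perturbation_def by blast
qed

theorem lemma4p1:
  fixes M :: "'k::euclidean_space set"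
    and d :: "'d::finite itself"
    and m :: "'k measure"
    and f :: "'k \<Rightarrow> 'k"
    and F :: "'k \<Rightarrow> 'n::euclidean_space \<Rightarrow> 'k"
    and I :: "nat set"
    and \<Lambda> :: "nat \<Rightarrow> 'k set"
    and \<mu> :: "nat \<Rightarrow> 'k measure"
    and \<mu>e :: "nat \<Rightarrow> real \<Rightarrow> 'k measure"
    and i :: nat
  assumes manifold: "compact_smooth_submanifold M d"
    and volume: "normalized_volume M d m"
    and f_diffeo: "diffeo M d f"
    and perturbation: "phys_perturbation M d m f F"
    and disjoint: "disjoint_family_on \<Lambda> I"
    and attractors: "\<forall>j\<in>I. attractor M f (\<Lambda> j)"
    and cover: "\<exists>N\<in>null_sets m. M - (\<Union>j\<in>I. Ws M f (\<Lambda> j)) \<subseteq> N"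
    and inv_meas: "\<forall>j\<in>I. prob_space (\<mu> j) \<and> sets (\<mu> j) = sets (Mborel M) \<and>
                      emeasure (\<mu> j) (\<Lambda> j) = 1 \<and> distr (\<mu> j) (Mborel M) f = \<mu> j"
    and stationary: "\<forall>j\<in>I. \<exists>U \<epsilon>1. 0 < \<epsilon>1 \<and> openin (top_of_set M) U \<and> \<Lambda> j \<subseteq> U \<and>
                      (\<forall>\<epsilon>. 0 < \<epsilon> \<and> \<epsilon> < \<epsilon>1 \<longrightarrow> stat_meas M F \<epsilon> (\<Lambda> j) U (\<mu>e j \<epsilon>))"
    and stoch_stable: "\<forall>j\<in>I. weak_conv_at_right0 M (\<mu>e j) (\<mu> j)"
    and i: "i \<in> I"
  shows "(\<forall>\<^sub>F \<epsilon> in at_right 0. Ws M f (\<Lambda> i) - basin M F \<epsilon> (\<mu>e i \<epsilon>) \<in> sets m) \<and>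
         ((\<lambda>\<epsilon>. measure m (Ws M f (\<Lambda> i) - basin M F \<epsilon> (\<mu>e i \<epsilon>))) \<longlongrightarrow> 0) (at_right 0)"
proof -
  interpret random_perturbation M F f
    using manifold perturbation by (rule random_perturbation_if_phys_perturbation)
  have "prob_space m" and sets_m: "sets m = sets (Mborel M)"
    using volume unfolding normalized_volume_def by blast+
  then have "finite_measure m"
    by (simp add: prob_space_def)
  from stationary i obtain U \<epsilon>1 where "0 < \<epsilon>1" "openin (top_of_set M) U" "\<Lambda> i \<subseteq> U"
    and "\<forall>\<epsilon>. 0 < \<epsilon> \<and> \<epsilon> < \<epsilon>1 \<longrightarrow> stat_meas M F \<epsilon> (\<Lambda> i) U (\<mu>e i \<epsilon>)"
    by blast
  moreover have attractor: "attractor M f (\<Lambda> i)"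
    using attractors i by blast
  then have "compact (\<Lambda> i)"
    unfolding attractor_def by (elim conjE)
  moreover have "\<Lambda> i \<noteq> {}"
    using attractor unfolding attractor_def by (elim conjE) blast
  ultimately show ?thesis
    using \<open>finite_measure m\<close> sets_m by (intro stable_set_diff_basin) auto
qed

end
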